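(* There exists a sequence $\{u_n\}_{n\ge1}\subset\mathscr{X}_1$ which separates the points of $\mathbb{M}^{ac}$ (and hence of $\mathscr{P}^{ac}$), i.e. for any $\mu\neq\nu$ in $\mathbb{M}^{ac}$ there is $n$ with $u_n(\mu)\neq u_n(\nu)$.
   Context: Let $(M,\rho)$ be a Polish space and $\lambda\neq0$ a $\sigma$-finite Radon measure on $M$. $\mathbb{M}$ is the set of finite Borel measures on $M$, $\mathbb{M}^{ac}=\{\mu\in\mathbb{M}:\mu\ll\lambda\}$, $\mathscr{P}^{ac}$ the probability measures in $\mathbb{M}^{ac}$. $\mathscr{X}$ is the class of functions $u(\mu)=g(\mu(f_1),\dots,\mu(f_n))$ on $\mathbb{M}$ with $n\in\mathbb{N}$, $f_i\in C_b(M)$, $g\in C^1_b(\mathbb{R}^n)$, with extrinsic derivative $D^Eu(\mu)(x)=\sum_i\partial_ig(\mu(f_1),\dots,\mu(f_n))f_i(x)$. $\mathscr{X}_1=\{u\in\mathscr{X}:\sup_{\mu\in\mathbb{M}^{ac}}\|D^Eu(\mu)\|_{L^1(\mu)}<\infty\}$. *)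

theory Defs
  imports "HOL-Analysis.Analysis"
begin

text \<open>R^n is represented as the subspace of nat => real of sequences vanishing from index n on.
  On this subspace the product topology of nat => real is the Euclidean topology.\<close>

definition Rn :: "nat \<Rightarrow> (nat \<Rightarrow> real) set" where
  "Rn n = {x. \<forall>i\<ge>n. x i = 0}"

definition C1b_with_partials ::
  "nat \<Rightarrow> ((nat \<Rightarrow> real) \<Rightarrow> real) \<Rightarrow> (nat \<Rightarrow> (nat \<Rightarrow> real) \<Rightarrow> real) \<Rightarrow> bool" where
  "C1b_with_partials n g pd \<longleftrightarrow>
     (\<forall>x\<in>Rn n. \<forall>i<n. ((\<lambda>t. g (x(i := t))) has_real_derivative pd i x) (at (x i)))
   \<and> (\<forall>i<n. continuous_on (Rn n) (pd i))
   \<and> continuous_on (Rn n) g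
   \<and> bounded (g ` Rn n)
   \<and> (\<forall>i<n. bounded (pd i ` Rn n))"

definition finite_borel_measures :: "'a::topological_space measure set" where
  "finite_borel_measures = {\<mu>. sets \<mu> = sets borel \<and> finite_measure \<mu>}"

definition radon_measure :: "'a::topological_space measure \<Rightarrow> bool" where
  "radon_measure L \<longleftrightarrow> sets L = sets borel
     \<and> (\<forall>x. \<exists>U. open U \<and> x \<in> U \<and> emeasure L U < \<infinity>)
     \<and> (\<forall>B\<in>sets borel. emeasure L B = (SUP K\<in>{K. compact K \<and> K \<subseteq> B}. emeasure L K))"

text \<open>M^ac: finite Borel measures absolutely continuous w.r.t. lambda
  (library convention: absolutely_continuous M N means N << M).\<close>

definition Mac :: "'a::topological_space measure \<Rightarrow> 'a measure set" where
  "Mac L = {\<mu>\<in>finite_borel_measures. absolutely_continuous L \<mu>}"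

definition Cb :: "('a::topological_space \<Rightarrow> real) set" where
  "Cb = {f. continuous_on UNIV f \<and> bounded (range f)}"

definition meas_vec :: "nat \<Rightarrow> (nat \<Rightarrow> 'a \<Rightarrow> real) \<Rightarrow> 'a measure \<Rightarrow> (nat \<Rightarrow> real)" where
  "meas_vec n fs \<mu> = (\<lambda>i. if i < n then integral\<^sup>L \<mu> (fs i) else 0)"

definition cyl :: "nat \<Rightarrow> (nat \<Rightarrow> 'a \<Rightarrow> real) \<Rightarrow> ((nat \<Rightarrow> real) \<Rightarrow> real) \<Rightarrow> 'a measure \<Rightarrow> real" where
  "cyl n fs g \<mu> = g (meas_vec n fs \<mu>)"

definition extr_deriv ::
  "nat \<Rightarrow> (nat \<Rightarrow> 'a \<Rightarrow> real) \<Rightarrow> (nat \<Rightarrow> (nat \<Rightarrow> real) \<Rightarrow> real) \<Rightarrow> 'a measure \<Rightarrow> 'a \<Rightarrow> real" where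
  "extr_deriv n fs pd \<mu> x = (\<Sum>i<n. pd i (meas_vec n fs \<mu>) * fs i x)"

definition X1 :: "'a::topological_space measure \<Rightarrow> ('a measure \<Rightarrow> real) set" where
  "X1 L = {u. \<exists>n fs g pd.
      (\<forall>i<n. fs i \<in> Cb) \<and> C1b_with_partials n g pd
      \<and> (\<forall>\<mu>\<in>finite_borel_measures. u \<mu> = cyl n fs g \<mu>)
      \<and> (\<exists>C. \<forall>\<mu>\<in>Mac L. (\<integral>x. \<bar>extr_deriv n fs pd \<mu> x\<bar> \<partial>\<mu>) \<le> C)}"

end

theory Submission
  imports Defs
begin

text \<open>Fix a countable base of the topology, closed under finite intersections. For a basic open
  set U the continuous cutoffs min 1 (m d(x, -U)) increase to the indicator of U, so by
  dominated convergence their integrals determine \<mu>(U) for every finite Borel measure \<mu>, and by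
  uniqueness of measures on an intersection-stable generator they determine \<mu>. Composing the
  integrals with arctan gives cylinder functions in X_1: the extrinsic derivative is
  f / (1 + t^2) with t = \<mu>(f), whose L^1(\<mu>)-norm t / (1 + t^2) is bounded when f is nonnegative.\<close>

definition open_cutoff :: "'a::metric_space set \<Rightarrow> nat \<Rightarrow> 'a \<Rightarrow> real" where
  "open_cutoff U m x = (if U = UNIV then 1 else min 1 (real m * infdist x (- U)))"
  \<comment> \<open>The case U = UNIV is separate because infdist x {} = 0.\<close>

lemma continuous_on_open_cutoff: "continuous_on UNIV (open_cutoff U m)"
  unfolding open_cutoff_def by (cases "U = UNIV") (auto intro!: continuous_intros)

lemma open_cutoff_nonneg: "0 \<le> open_cutoff U m x"
  and open_cutoff_le_1: "open_cutoff U m x \<le> 1"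
  by (auto simp: open_cutoff_def infdist_nonneg)

lemma abs_open_cutoff_le_1: "\<bar>open_cutoff U m x\<bar> \<le> 1"
  by (simp add: open_cutoff_nonneg open_cutoff_le_1)

lemma open_cutoff_in_Cb: "open_cutoff U m \<in> Cb"
  unfolding Cb_def bounded_iff
  using continuous_on_open_cutoff by (auto intro!: exI[of _ 1] simp: abs_open_cutoff_le_1)

lemma open_cutoff_tendsto_indicator:
  assumes "open U"
  shows "(\<lambda>m. open_cutoff U m x) \<longlonglongrightarrow> indicator U x"
proof (cases "U = UNIV \<or> x \<notin> U")
  case True
  then show ?thesis by (cases "U = UNIV") (auto simp: open_cutoff_def)
next
  case False
  then have "U \<noteq> UNIV" "x \<in> U" by auto
  then have d: "infdist x (- U) > 0"
    using assms by (intro infdist_pos_not_in_closed) auto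
  obtain N :: nat where N: "1 / infdist x (- U) < real N"
    using reals_Archimedean2 by blast
  have "eventually (\<lambda>m. open_cutoff U m x = 1) sequentially"
  proof (rule eventually_sequentiallyI[of N])
    fix m assume "N \<le> m"
    with N d have "1 < real m * infdist x (- U)"
      by (simp add: divide_less_eq) (smt (verit) mult_right_mono of_nat_mono)
    then show "open_cutoff U m x = 1"
      using \<open>U \<noteq> UNIV\<close> by (simp add: open_cutoff_def)
  qed
  then show ?thesis
    using \<open>x \<in> U\<close> by (simp add: tendsto_eventually)
qed

lemma integral_open_cutoff_tendsto_measure:
  fixes \<mu> :: "'a::metric_space measure"
  assumes "\<mu> \<in> finite_borel_measures" and "open U"
  shows "(\<lambda>m. \<integral>x. open_cutoff U m x \<partial>\<mu>) \<longlonglongrightarrow> measure \<mu> U"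
proof -
  have sets: "sets \<mu> = sets borel" and "finite_measure \<mu>"
    using assms(1) by (auto simp: finite_borel_measures_def)
  have "(\<lambda>m. \<integral>x. open_cutoff U m x \<partial>\<mu>) \<longlonglongrightarrow> (\<integral>x. indicator U x \<partial>\<mu>)"
  proof (rule integral_dominated_convergence[where w = "\<lambda>_. 1"])
    have "U \<in> sets \<mu>"
      using sets assms(2) by simp
    then show "(indicator U :: 'a \<Rightarrow> real) \<in> borel_measurable \<mu>"
      by simp
    show "open_cutoff U m \<in> borel_measurable \<mu>" for m
      by (simp add: measurable_cong_sets[OF sets refl]
          borel_measurable_continuous_onI[OF continuous_on_open_cutoff])
    show "integrable \<mu> (\<lambda>_. 1::real)"
      using \<open>finite_measure \<mu>\<close> by (rule finite_measure.integrable_const)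
    show "AE x in \<mu>. (\<lambda>m. open_cutoff U m x) \<longlonglongrightarrow> indicator U x"
      using open_cutoff_tendsto_indicator[OF assms(2)] by simp
    show "AE x in \<mu>. norm (open_cutoff U m x) \<le> 1" for m
      by (simp add: abs_open_cutoff_le_1)
  qed
  then show ?thesis
    using sets_eq_imp_space_eq[OF sets] by simp
qed

lemma measure_eq_if_open_cutoff_integrals_eq:
  fixes \<mu> \<nu> :: "'a::metric_space measure"
  assumes "\<mu> \<in> finite_borel_measures" "\<nu> \<in> finite_borel_measures" "open U"
    and "\<And>m. (\<integral>x. open_cutoff U m x \<partial>\<mu>) = (\<integral>x. open_cutoff U m x \<partial>\<nu>)"
  shows "measure \<mu> U = measure \<nu> U"
  using integral_open_cutoff_tendsto_measure[OF assms(1,3)]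
    integral_open_cutoff_tendsto_measure[OF assms(2,3)]
  by (simp add: assms(4) LIMSEQ_unique)

lemma ex_countable_Int_stable_open_generator:
  "\<exists>E::'a::second_countable_topology set set. countable E \<and> Int_stable E \<and> UNIV \<in> E
     \<and> (\<forall>U\<in>E. open U) \<and> sets borel = sigma_sets UNIV E"
proof -
  obtain B :: "'a set set" where B: "countable B" "topological_basis B"
    using ex_countable_basis by blast
  define E where "E = Inter ` {F. finite F \<and> F \<subseteq> B}"
  have "countable E"
    unfolding E_def using countable_Collect_finite_subset[OF B(1)] by simp
  moreover have "Int_stable E"
  proof (rule Int_stableI)
    fix a b assume "a \<in> E" "b \<in> E"
    then obtain F G where "finite F" "F \<subseteq> B" "a = \<Inter>F" "finite G" "G \<subseteq> B" "b = \<Inter>G"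
      by (auto simp: E_def)
    then show "a \<inter> b \<in> E"
      unfolding E_def by (auto intro!: image_eqI[of _ _ "F \<union> G"])
  qed
  moreover have "UNIV \<in> E"
    unfolding E_def by (auto intro!: image_eqI[of _ _ "{}"])
  moreover have open_E: "\<forall>U\<in>E. open U"
    using topological_basis_open[OF B(2)] unfolding E_def by auto
  moreover have "sets borel = sigma_sets UNIV E"
  proof (rule antisym)
    have "B \<subseteq> E"
      unfolding E_def by (auto intro!: image_eqI[of _ _ "{_}"])
    then have "sigma_sets UNIV B \<subseteq> sigma_sets UNIV E"
      by (rule sigma_sets_mono')
    then show "sets borel \<subseteq> sigma_sets UNIV E"
      by (simp add: borel_eq_countable_basis[OF B])
    show "sigma_sets UNIV E \<subseteq> sets borel"
      using open_E by (intro borel_sigma_sets_subset) auto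
  qed
  ultimately show ?thesis by blast
qed

lemma finite_borel_measure_eqI_generator:
  fixes \<mu> \<nu> :: "'a::topological_space measure"
  assumes "\<mu> \<in> finite_borel_measures" "\<nu> \<in> finite_borel_measures"
    and "Int_stable E" "UNIV \<in> E" "sets borel = sigma_sets UNIV E"
    and "\<And>U. U \<in> E \<Longrightarrow> measure \<mu> U = measure \<nu> U"
  shows "\<mu> = \<nu>"
proof -
  have \<mu>: "sets \<mu> = sets borel" "finite_measure \<mu>"
    and \<nu>: "sets \<nu> = sets borel" "finite_measure \<nu>"
    using assms(1,2) by (auto simp: finite_borel_measures_def)
  show ?thesis
  proof (rule measure_eqI_generator_eq_countable[of E UNIV _ _ "{UNIV}"])
    show "emeasure \<mu> U = emeasure \<nu> U" if "U \<in> E" for U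
      using assms(6)[OF that] by (simp add: finite_measure.emeasure_eq_measure \<mu>(2) \<nu>(2))
    show "emeasure \<mu> U \<noteq> \<infinity>" for U
      using finite_measure.emeasure_finite[OF \<mu>(2)] by simp
  qed (use assms(3,4,5) \<mu> \<nu> in auto)
qed

lemma ex_measure_determining_sequence:
  "\<exists>f :: nat \<Rightarrow> 'a::{metric_space, second_countable_topology} \<Rightarrow> real.
     (\<forall>k. f k \<in> Cb \<and> (\<forall>x. 0 \<le> f k x))
     \<and> (\<forall>\<mu>\<in>finite_borel_measures. \<forall>\<nu>\<in>finite_borel_measures.
          (\<forall>k. (\<integral>x. f k x \<partial>\<mu>) = (\<integral>x. f k x \<partial>\<nu>)) \<longrightarrow> \<mu> = \<nu>)"
proof -
  obtain E :: "'a set set" where E: "countable E" "Int_stable E" "UNIV \<in> E"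
    "\<forall>U\<in>E. open U" "sets borel = sigma_sets UNIV E"
    using ex_countable_Int_stable_open_generator by blast
  define f where "f k = case_prod open_cutoff (from_nat_into (E \<times> UNIV) k)" for k
  have f_surj: "\<exists>k. f k = open_cutoff U m" if U: "U \<in> E" for U m
  proof -
    have "countable (E \<times> (UNIV :: nat set))" "(U, m) \<in> E \<times> UNIV"
      using U E(1) by simp_all
    then obtain k where "from_nat_into (E \<times> UNIV) k = (U, m)"
      by (meson from_nat_into_surj)
    then have "f k = open_cutoff U m"
      by (simp add: f_def)
    then show ?thesis ..
  qed
  have "\<mu> = \<nu>"
    if "\<mu> \<in> finite_borel_measures" "\<nu> \<in> finite_borel_measures"
      and eq: "\<forall>k. (\<integral>x. f k x \<partial>\<mu>) = (\<integral>x. f k x \<partial>\<nu>)" for \<mu> \<nu>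
  proof (rule finite_borel_measure_eqI_generator[OF that(1,2) E(2,3,5)])
    fix U assume "U \<in> E"
    show "measure \<mu> U = measure \<nu> U"
    proof (rule measure_eq_if_open_cutoff_integrals_eq[OF that(1,2)])
      show "open U"
        using E(4) \<open>U \<in> E\<close> by blast
      show "(\<integral>x. open_cutoff U m x \<partial>\<mu>) = (\<integral>x. open_cutoff U m x \<partial>\<nu>)" for m
        using eq f_surj[OF \<open>U \<in> E\<close>, of m] by metis
    qed
  qed
  moreover have "f k \<in> Cb \<and> (\<forall>x. 0 \<le> f k x)" for k
    by (simp add: f_def case_prod_beta open_cutoff_in_Cb open_cutoff_nonneg)
  ultimately show ?thesis by blast
qed

lemma arctan_integral_in_X1:
  fixes f :: "'a::topological_space \<Rightarrow> real"
  assumes "f \<in> Cb" and nonneg: "\<And>x. 0 \<le> f x"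
  shows "(\<lambda>\<mu>. arctan (\<integral>x. f x \<partial>\<mu>)) \<in> X1 L"
proof -
  define g :: "(nat \<Rightarrow> real) \<Rightarrow> real" where "g v = arctan (v 0)" for v
  define pd :: "nat \<Rightarrow> (nat \<Rightarrow> real) \<Rightarrow> real" where "pd i v = inverse (1 + (v 0)\<^sup>2)" for i v
  have coord: "continuous_on (Rn 1) (\<lambda>v. v 0)"
    by (rule continuous_on_subset[OF continuous_on_product_coordinates]) simp
  have "C1b_with_partials 1 g pd"
    unfolding C1b_with_partials_def
  proof (intro conjI ballI allI impI)
    show "((\<lambda>t. g (x(i := t))) has_real_derivative pd i x) (at (x i))" if "i < 1" for x i
      using that by (simp add: g_def pd_def DERIV_arctan)
    show "continuous_on (Rn 1) (pd i)" for i
      unfolding pd_def by (intro continuous_intros coord) (simp add: add_nonneg_eq_0_iff)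
    show "continuous_on (Rn 1) g"
      unfolding g_def by (intro continuous_intros coord)
    have "\<bar>arctan y\<bar> \<le> pi / 2" for y
      using arctan_bounded[of y] by linarith
    then show "bounded (g ` Rn 1)"
      unfolding g_def bounded_iff by (auto intro!: exI[of _ "pi / 2"])
    show "bounded (pd i ` Rn 1)" for i
      unfolding pd_def bounded_iff by (auto intro!: exI[of _ 1] simp: inverse_le_1_iff)
  qed
  moreover have "(\<integral>x. \<bar>extr_deriv 1 (\<lambda>_. f) pd \<mu> x\<bar> \<partial>\<mu>) \<le> 1 / 2" for \<mu>
  proof -
    define t where "t = (\<integral>x. f x \<partial>\<mu>)"
    have "t \<ge> 0"
      unfolding t_def using nonneg by simp
    have "(\<integral>x. \<bar>extr_deriv 1 (\<lambda>_. f) pd \<mu> x\<bar> \<partial>\<mu>) = (\<integral>x. inverse (1 + t\<^sup>2) * f x \<partial>\<mu>)"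
      using nonneg by (simp add: extr_deriv_def pd_def meas_vec_def t_def abs_mult add_pos_nonneg)
    also have "\<dots> = t / (1 + t\<^sup>2)"
      by (simp add: t_def divide_inverse mult.commute)
    also have "\<dots> \<le> 1 / 2"
    proof -
      have "2 * t \<le> 1 + t\<^sup>2"
        using zero_le_power2[of "t - 1"] by (simp add: power2_diff)
      then show ?thesis
        by (simp add: divide_le_eq add_pos_nonneg)
    qed
    finally show ?thesis .
  qed
  ultimately show ?thesis
    unfolding X1_def using assms(1)
    by (intro CollectI exI[of _ 1] exI[of _ "\<lambda>_. f"] exI[of _ g] exI[of _ pd])
       (auto simp: cyl_def meas_vec_def g_def intro!: exI[of _ "1 / 2"])
qed

theorem lemma2p6:
  fixes L :: "'a::polish_space measure"
  assumes "radon_measure L"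
    and "sigma_finite_measure L"
    and "emeasure L (space L) \<noteq> 0"
  shows "\<exists>u :: nat \<Rightarrow> 'a measure \<Rightarrow> real. (\<forall>k. u k \<in> X1 L) \<and>
           (\<forall>\<mu>\<in>Mac L. \<forall>\<nu>\<in>Mac L. \<mu> \<noteq> \<nu> \<longrightarrow> (\<exists>k. u k \<mu> \<noteq> u k \<nu>))"
proof -
  obtain f :: "nat \<Rightarrow> 'a \<Rightarrow> real" where f: "\<And>k. f k \<in> Cb" "\<And>k x. 0 \<le> f k x"
    and determining: "\<And>\<mu> \<nu>. \<mu> \<in> finite_borel_measures \<Longrightarrow> \<nu> \<in> finite_borel_measures \<Longrightarrow>
        (\<forall>k. (\<integral>x. f k x \<partial>\<mu>) = (\<integral>x. f k x \<partial>\<nu>)) \<Longrightarrow> \<mu> = \<nu>"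
    using ex_measure_determining_sequence by blast
  define u where "u k \<mu> = arctan (\<integral>x. f k x \<partial>\<mu>)" for k \<mu>
  have "u k \<in> X1 L" for k
    unfolding u_def using f by (rule arctan_integral_in_X1)
  moreover have "\<exists>k. u k \<mu> \<noteq> u k \<nu>" if "\<mu> \<in> Mac L" "\<nu> \<in> Mac L" "\<mu> \<noteq> \<nu>" for \<mu> \<nu>
    using that determining[of \<mu> \<nu>] by (auto simp: Mac_def u_def arctan_eq_iff)
  ultimately show ?thesis by blast
qed

end
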